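(* Let $d\ge2$, $0<\tau\le1$, and $\varphi_0\in\mathscr S'(\mathbb{R}^d)$ with $\nabla\varphi_0\in\mathcal{PM}^{d-1}$. Then $$\|L\|_{\mathscr L(\mathscr{Y}_{d-\frac43})}\lesssim\sqrt\tau\,|\ln(\tau/e)|\,\|\nabla\varphi_0\|_{\mathcal{PM}^{d-1}},\qquad \|L\|_{\mathscr L(\mathscr{Y}_{d-\frac43},\mathcal X)}\lesssim\sqrt\tau\,|\ln(\tau/e)|\,\|\nabla\varphi_0\|_{\mathcal{PM}^{d-1}},$$ with implied constants depending only on $d$.
   Context: Fourier transform $\widehat f(\xi)=\int f(x)e^{-i\xi\cdot x}dx$. $\mathcal{PM}^{a}=\{f\in\mathscr S'(\mathbb{R}^d):\|f\|_{\mathcal{PM}^a}=\operatorname{ess\,sup}_\xi|\xi|^a|\widehat f(\xi)|<\infty\}$; $\|\nabla\varphi_0\|_{\mathcal{PM}^{d-1}}=\operatorname{ess\,sup}_\xi|\xi|^{d}|\widehat{\varphi_0}(\xi)|$. For $a<d$, $\mathscr{Y}_a=\{u\in L^\infty_{\rm loc}(0,\infty;\mathscr S'(\mathbb{R}^d)):\|u\|_{\mathscr{Y}_a}=\operatorname{ess\,sup}_{t>0,\xi}t^{1+(a-d)/2}|\xi|^a|\widehat u(\xi,t)|<\infty\}$; $\mathcal X=L^\infty(0,\infty;\mathcal{PM}^{d-2})$. The linear operator $L$ is $\widehat{Lu}(\xi,t)=(2\pi)^{-d}\int_0^t\int_{\mathbb{R}^d}e^{-(t-s)|\xi|^2}(\xi\cdot\eta)\widehat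 u(\xi-\eta,s)e^{-s|\eta|^2/\tau}\widehat{\varphi_0}(\eta)\,d\eta\,ds$. $\mathscr L(Y,Z)$ denotes bounded linear operators with operator norm, $\mathscr L(Y)=\mathscr L(Y,Y)$. *)

theory Defs
  imports "HOL-Analysis.Analysis" "HOL-Probability.Essential_Supremum"
begin

text \<open>Everything is expressed on the Fourier side.  A time-dependent (tempered
distribution valued) function u is represented by its spatial Fourier transform
U t xi (= hat u(xi,t)), a function of t > 0 and xi in R^d, where R^d is
real^'n with d = CARD('n).  hat phi_0 is represented by a function g.\<close>

definition wnorm :: "real \<Rightarrow> real \<Rightarrow> (real \<Rightarrow> real^'n::finite \<Rightarrow> complex) \<Rightarrow> ereal" where
  "wnorm b a U = esssup lborel
     (\<lambda>p::real \<times> (real^'n). if 0 < fst p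
        then ereal (fst p powr b * norm (snd p) powr a * cmod (U (fst p) (snd p)))
        else 0)"

definition Ynorm :: "real \<Rightarrow> (real \<Rightarrow> real^'n::finite \<Rightarrow> complex) \<Rightarrow> ereal" where
  "Ynorm a U = wnorm (1 + (a - real CARD('n)) / 2) a U"

text \<open>Norm of X = L^infty(0,infty; PM^(d-2)): ess sup_{t>0,xi} |xi|^(d-2) |hat u(xi,t)|.\<close>
definition Xnorm :: "(real \<Rightarrow> real^'n::finite \<Rightarrow> complex) \<Rightarrow> ereal" where
  "Xnorm U = wnorm 0 (real CARD('n) - 2) U"

definition meas_td :: "(real \<Rightarrow> real^'n::finite \<Rightarrow> complex) \<Rightarrow> bool" where
  "meas_td U \<longleftrightarrow> (\<lambda>p::real \<times> (real^'n). if 0 < fst p then U (fst p) (snd p) else 0)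
                    \<in> borel_measurable lborel"

definition inY :: "real \<Rightarrow> (real \<Rightarrow> real^'n::finite \<Rightarrow> complex) \<Rightarrow> bool" where
  "inY a U \<longleftrightarrow> meas_td U \<and> Ynorm a U < \<infinity>"

definition inX :: "(real \<Rightarrow> real^'n::finite \<Rightarrow> complex) \<Rightarrow> bool" where
  "inX U \<longleftrightarrow> meas_td U \<and> Xnorm U < \<infinity>"

text \<open>|| grad phi_0 ||_{PM^(d-1)} = ess sup_xi |xi|^d |hat phi_0(xi)|, with g = hat phi_0.\<close>
definition PMgrad :: "(real^'n::finite \<Rightarrow> complex) \<Rightarrow> ereal" where
  "PMgrad g = esssup lborel (\<lambda>xi::real^'n. ereal (norm xi powr real CARD('n) * cmod (g xi)))"

definition Lop :: "real \<Rightarrow> (real^'n::finite \<Rightarrow> complex) \<Rightarrow> (real \<Rightarrow> real^'n \<Rightarrow> complex)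
                    \<Rightarrow> real \<Rightarrow> real^'n \<Rightarrow> complex" where
  "Lop \<tau> g U t xi = complex_of_real ((2 * pi) powr (- real CARD('n))) *
     (LINT s:{0..t}|lborel. (LINT eta|lborel.
        complex_of_real (exp (- (t - s) * (norm xi)\<^sup>2) * (xi \<bullet> eta) * exp (- s * (norm eta)\<^sup>2 / \<tau>))
        * U s (xi - eta) * g eta))"

end

theory Submission
  imports Defs
begin

text \<open>On the Fourier side write \<open>a = d - 4/3\<close>.  The hypotheses give
  \<open>|u(s,\<zeta>)| \<le> Y s^(-1/3) |\<zeta>|^(-a)\<close> and \<open>|g(\<eta>)| \<le> P |\<eta>|^(-d)\<close>, so with
  \<open>|\<xi> \<bullet> \<eta>| \<le> |\<xi>| |\<eta>|\<close> the space integral is controlled by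
  \<open>\<integral> |\<eta>|^(1-d) |\<xi> - \<eta>|^(-a) e^(-s |\<eta>|^2 / \<tau>) d\<eta> \<le> C |\<xi>|^(-a) (s/\<tau>)^(-1/2)\<close>,
  proved by splitting at \<open>|\<eta> - \<xi>| = |\<xi>|/2\<close> and summing Riesz potentials over dyadic
  shells; this is where \<open>sqrt \<tau>\<close> comes from.  The remaining time integral
  \<open>\<integral>\<^sub>0\<^sup>t e^(-(t-s) |\<xi>|^2) s^(-5/6) ds\<close>, split at \<open>t/2\<close>, is at most both
  \<open>7 |\<xi>|^(-1/3)\<close> and \<open>7 (t/2)^(-1/3) |\<xi>|^(-1)\<close>, which is exactly what the weights of
  \<open>X\<close> and \<open>Y\<^sub>a\<close> absorb.\<close>

section \<open>Riesz potentials on balls and their complements\<close>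

lemma emeasure_ball_le_cube:
  fixes x :: "'a::euclidean_space"
  assumes "0 \<le> \<rho>"
  shows "emeasure lborel (ball x \<rho>) \<le> ennreal ((2 * \<rho>) ^ DIM('a))"
proof -
  let ?e = "\<rho> *\<^sub>R (\<Sum>Basis :: 'a)"
  have "ball x \<rho> \<subseteq> cbox (x - ?e) (x + ?e)"
  proof
    fix y assume "y \<in> ball x \<rho>"
    then have "norm (y - x) < \<rho>" by (simp add: dist_norm norm_minus_commute)
    moreover have "\<bar>(y - x) \<bullet> b\<bar> \<le> norm (y - x)" if "b \<in> Basis" for b
      using that by (rule Basis_le_norm)
    ultimately show "y \<in> cbox (x - ?e) (x + ?e)"
      by (force simp: mem_box inner_diff_left inner_add_left)
  qed
  then have "emeasure lborel (ball x \<rho>) \<le> emeasure lborel (cbox (x - ?e) (x + ?e))"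
    by (intro emeasure_mono) simp_all
  also have "\<dots> = ennreal ((2 * \<rho>) ^ DIM('a))"
    using assms by (simp add: emeasure_lborel_cbox_eq inner_diff_left inner_add_left algebra_simps)
  finally show ?thesis .
qed

lemma nn_integral_le_shell_sum:
  fixes h :: "'a::euclidean_space \<Rightarrow> real" and S :: "nat \<Rightarrow> 'a set"
  assumes cover: "\<And>y. y \<in> A \<Longrightarrow> h y \<noteq> 0 \<Longrightarrow> \<exists>k. y \<in> S k"
    and S_sets: "\<And>k. S k \<in> sets lborel"
    and h_le: "\<And>k y. y \<in> S k \<Longrightarrow> h y \<le> c k"
    and c_nonneg: "\<And>k. 0 \<le> c k"
    and S_measure: "\<And>k. emeasure lborel (S k) \<le> ennreal (m k)"
    and m_nonneg: "\<And>k. 0 \<le> m k"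
    and summable: "summable (\<lambda>k. c k * m k)"
  shows "(\<integral>\<^sup>+y. indicator A y * ennreal (h y) \<partial>lborel) \<le> ennreal (\<Sum>k. c k * m k)"
proof -
  have term_le_suminf: "f k \<le> (\<Sum>i. f i)" for f :: "nat \<Rightarrow> ennreal" and k
    using sum_le_suminf[of f "{k}"] by (simp add: summableI)
  have "indicator A y * ennreal (h y) \<le> (\<Sum>k. ennreal (c k) * indicator (S k) y)" for y
  proof (cases "y \<in> A \<and> h y \<noteq> 0")
    case True
    then obtain k where k: "y \<in> S k" using cover by blast
    have "indicator A y * ennreal (h y) \<le> ennreal (c k) * indicator (S k) y"
      using True k h_le[OF k] by (simp add: ennreal_leI)
    also have "\<dots> \<le> (\<Sum>k. ennreal (c k) * indicator (S k) y)"
      by (rule term_le_suminf)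
    finally show ?thesis .
  qed auto
  then have "(\<integral>\<^sup>+y. indicator A y * ennreal (h y) \<partial>lborel)
      \<le> (\<integral>\<^sup>+y. (\<Sum>k. ennreal (c k) * indicator (S k) y) \<partial>lborel)"
    by (rule nn_integral_mono)
  also have "\<dots> = (\<Sum>k. ennreal (c k) * emeasure lborel (S k))"
    using S_sets by (simp add: nn_integral_suminf nn_integral_cmult_indicator)
  also have "\<dots> \<le> (\<Sum>k. ennreal (c k * m k))"
    using S_measure c_nonneg by (intro suminf_le) (auto simp: ennreal_mult' mult_left_mono summableI)
  also have "\<dots> = ennreal (\<Sum>k. c k * m k)"
    using summable c_nonneg m_nonneg by (intro suminf_ennreal2) auto
  finally show ?thesis .
qed

lemma dyadic_shell_below:
  fixes r v :: real
  assumes "0 < v" "v < r"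
  obtains k :: nat where "r / 2^(k+1) \<le> v" "v < r / 2^k"
proof -
  obtain n where "r / v < 2^n" using real_arch_pow[of 2 "r / v"] by auto
  then have n: "r / 2^n \<le> v" using assms by (simp add: field_simps)
  define N where "N = (LEAST n. r / 2^n \<le> v)"
  have N: "r / 2^N \<le> v" unfolding N_def by (rule LeastI[of _ n]) (fact n)
  with assms obtain k where k: "N = Suc k" by (cases N) auto
  have "\<not> r / 2^k \<le> v" using Least_le[of "\<lambda>n. r / 2^n \<le> v" k] k unfolding N_def by auto
  with N k show ?thesis by (intro that) auto
qed

lemma dyadic_shell_above:
  fixes r v :: real
  assumes "0 < r" "r \<le> v"
  obtains k :: nat where "r * 2^k \<le> v" "v < r * 2^(k+1)"
proof -
  obtain n where "v / r < 2^n" using real_arch_pow[of 2 "v / r"] by auto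
  then have "v < r * 2^n" using assms by (simp add: field_simps)
  also have "\<dots> \<le> r * 2^(n+1)" using assms by simp
  finally have n: "v < r * 2^(n+1)" .
  define N where "N = (LEAST n. v < r * 2^(n+1))"
  have N: "v < r * 2^(N+1)" unfolding N_def by (rule LeastI[of _ n]) (fact n)
  have "r * 2^N \<le> v"
  proof (cases N)
    case (Suc k)
    then show ?thesis using Least_le[of "\<lambda>n. v < r * 2^(n+1)" k] unfolding N_def by force
  qed (use assms in simp)
  with N show ?thesis by (intro that)
qed

definition riesz_ball_const :: "real \<Rightarrow> real \<Rightarrow> real" where
  "riesz_ball_const \<alpha> d = 2 powr (\<alpha> + d) / (1 - 2 powr (\<alpha> - d))"

definition riesz_outer_const :: "real \<Rightarrow> real \<Rightarrow> real" where
  "riesz_outer_const \<beta> d = 4 powr d / (1 - 2 powr (d - \<beta>))"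

lemma riesz_ball_const_pos: "\<alpha> < d \<Longrightarrow> 0 < riesz_ball_const \<alpha> d"
  unfolding riesz_ball_const_def by (intro divide_pos_pos) (auto intro: powr_less_one)

lemma riesz_outer_const_pos: "d < \<beta> \<Longrightarrow> 0 < riesz_outer_const \<beta> d"
  unfolding riesz_outer_const_def by (intro divide_pos_pos) (auto intro: powr_less_one)

text \<open>Both Riesz-potential estimates decompose the domain into the dyadic shells
  \<open>r/2^(k+1) \<le> |y - x| < r/2^k\<close>, resp. \<open>r 2^k \<le> |y - x| < r 2^(k+1)\<close>, on which the
  integrand is bounded by its value on the near boundary sphere and the volume by a cube;
  the resulting series are geometric.\<close>

lemma nn_integral_ball_norm_powr_le:
  fixes x :: "'a::euclidean_space"
  assumes \<alpha>: "0 \<le> \<alpha>" "\<alpha> < real DIM('a)" and r: "0 < r"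
  shows "(\<integral>\<^sup>+y. indicator (ball x r) y * ennreal (norm (y - x) powr (-\<alpha>)) \<partial>lborel)
          \<le> ennreal (riesz_ball_const \<alpha> (real DIM('a)) * r powr (real DIM('a) - \<alpha>))"
proof -
  define d where "d = DIM('a)"
  define q where "q = (2::real) powr (\<alpha> - real d)"
  have q: "0 \<le> q" "q < 1" using \<alpha> unfolding q_def d_def by (auto intro: powr_less_one)
  define S where "S k = {y. r/2^(k+1) \<le> norm (y - x) \<and> norm (y - x) < r/2^k}" for k :: nat
  have term_eq: "(r/2^(k+1)) powr (-\<alpha>) * (2*(r/2^k))^d = r powr (real d - \<alpha>) * 2 powr (\<alpha> + real d) * q^k" for k
    using r unfolding q_def
    by (simp add: powr_divide powr_mult powr_diff powr_add powr_minus powr_powr field_simps flip: powr_realpow)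
  have "(\<integral>\<^sup>+y. indicator (ball x r) y * ennreal (norm (y - x) powr (-\<alpha>)) \<partial>lborel)
        \<le> ennreal (\<Sum>k. (r/2^(k+1)) powr (-\<alpha>) * (2*(r/2^k))^d)"
  proof (rule nn_integral_le_shell_sum[where S=S])
    fix y assume "y \<in> ball x r" "norm (y - x) powr - \<alpha> \<noteq> 0"
    then have "0 < norm (y - x)" "norm (y - x) < r" by (auto simp: dist_norm norm_minus_commute)
    then obtain k where "r/2^(k+1) \<le> norm (y - x)" "norm (y - x) < r/2^k" by (rule dyadic_shell_below)
    then show "\<exists>k. y \<in> S k" unfolding S_def by auto
  next
    fix k y assume "y \<in> S k"
    then show "norm (y - x) powr (-\<alpha>) \<le> (r/2^(k+1)) powr (-\<alpha>)"
      using r \<alpha> unfolding S_def by (intro powr_mono2') auto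
  next
    fix k
    have "S k \<subseteq> ball x (r/2^k)" unfolding S_def by (auto simp: dist_norm norm_minus_commute)
    then have "emeasure lborel (S k) \<le> emeasure lborel (ball x (r/2^k))"
      by (intro emeasure_mono) simp_all
    also have "\<dots> \<le> ennreal ((2*(r/2^k))^d)"
      unfolding d_def by (rule emeasure_ball_le_cube) (use r in simp)
    finally show "emeasure lborel (S k) \<le> ennreal ((2*(r/2^k))^d)" .
  next
    show "summable (\<lambda>k. (r/2^(k+1)) powr (-\<alpha>) * (2*(r/2^k))^d)"
      unfolding term_eq using q by (intro summable_mult summable_geometric) simp
  qed (use r in \<open>auto simp: S_def\<close>)
  also have "(\<Sum>k. (r/2^(k+1)) powr (-\<alpha>) * (2*(r/2^k))^d) = r powr (real d - \<alpha>) * 2 powr (\<alpha> + real d) / (1 - q)"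
    unfolding term_eq using q by (simp add: suminf_mult suminf_geometric divide_simps)
  finally show ?thesis unfolding q_def d_def riesz_ball_const_def by (simp add: mult.commute)
qed

lemma nn_integral_outside_ball_norm_powr_le:
  fixes x :: "'a::euclidean_space"
  assumes \<beta>: "real DIM('a) < \<beta>" and r: "0 < r"
  shows "(\<integral>\<^sup>+y. indicator (- ball x r) y * ennreal (norm (y - x) powr (-\<beta>)) \<partial>lborel)
          \<le> ennreal (riesz_outer_const \<beta> (real DIM('a)) * r powr (real DIM('a) - \<beta>))"
proof -
  define d where "d = DIM('a)"
  define q where "q = (2::real) powr (real d - \<beta>)"
  have q: "0 \<le> q" "q < 1" using \<beta> unfolding q_def d_def by (auto intro: powr_less_one)
  have \<beta>_nonneg: "0 \<le> \<beta>" using \<beta> by (metis less_eq_real_def of_nat_0_le_iff order_trans)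
  define S where "S k = {y. r*2^k \<le> norm (y - x) \<and> norm (y - x) < r*2^(k+1)}" for k :: nat
  have term_eq: "(r*2^k) powr (-\<beta>) * (2*(r*2^(k+1)))^d = r powr (real d - \<beta>) * 4 powr real d * q^k" for k
    using r unfolding q_def
    by (simp add: powr_mult powr_diff powr_add powr_minus powr_powr field_simps flip: powr_realpow)
  have "(\<integral>\<^sup>+y. indicator (- ball x r) y * ennreal (norm (y - x) powr (-\<beta>)) \<partial>lborel)
        \<le> ennreal (\<Sum>k. (r*2^k) powr (-\<beta>) * (2*(r*2^(k+1)))^d)"
  proof (rule nn_integral_le_shell_sum[where S=S])
    fix y assume "y \<in> - ball x r"
    then have "r \<le> norm (y - x)" by (simp add: dist_norm norm_minus_commute)
    with r obtain k where "r*2^k \<le> norm (y - x)" "norm (y - x) < r*2^(k+1)" by (rule dyadic_shell_above)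
    then show "\<exists>k. y \<in> S k" unfolding S_def by auto
  next
    fix k y assume "y \<in> S k"
    then show "norm (y - x) powr (-\<beta>) \<le> (r*2^k) powr (-\<beta>)"
      using r \<beta>_nonneg unfolding S_def by (intro powr_mono2') auto
  next
    fix k
    have "S k \<subseteq> ball x (r*2^(k+1))" unfolding S_def by (auto simp: dist_norm norm_minus_commute)
    then have "emeasure lborel (S k) \<le> emeasure lborel (ball x (r*2^(k+1)))"
      by (intro emeasure_mono) simp_all
    also have "\<dots> \<le> ennreal ((2*(r*2^(k+1)))^d)"
      unfolding d_def by (rule emeasure_ball_le_cube) (use r in simp)
    finally show "emeasure lborel (S k) \<le> ennreal ((2*(r*2^(k+1)))^d)" .
  next
    show "summable (\<lambda>k. (r*2^k) powr (-\<beta>) * (2*(r*2^(k+1)))^d)"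
      unfolding term_eq using q by (intro summable_mult summable_geometric) simp
  qed (use r in \<open>auto simp: S_def\<close>)
  also have "(\<Sum>k. (r*2^k) powr (-\<beta>) * (2*(r*2^(k+1)))^d) = r powr (real d - \<beta>) * 4 powr real d / (1 - q)"
    unfolding term_eq using q by (simp add: suminf_mult suminf_geometric divide_simps)
  finally show ?thesis unfolding q_def d_def riesz_outer_const_def by (simp add: mult.commute)
qed

section \<open>Gaussian-weighted potentials\<close>

lemma nn_integral_split_ball:
  fixes f :: "'a::euclidean_space \<Rightarrow> ennreal"
  assumes "f \<in> borel_measurable borel"
  shows "(\<integral>\<^sup>+y. f y \<partial>lborel)
    = (\<integral>\<^sup>+y. indicator (ball x r) y * f y \<partial>lborel) + (\<integral>\<^sup>+y. indicator (- ball x r) y * f y \<partial>lborel)"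
proof -
  have [measurable]: "f \<in> borel_measurable lborel" "ball x r \<in> sets borel"
    using assms by (simp_all add: measurable_lborel1)
  have "f y = indicator (ball x r) y * f y + indicator (- ball x r) y * f y" for y
    by (cases "y \<in> ball x r") auto
  then have "(\<integral>\<^sup>+y. f y \<partial>lborel)
      = (\<integral>\<^sup>+y. indicator (ball x r) y * f y + indicator (- ball x r) y * f y \<partial>lborel)"
    by (intro nn_integral_cong) simp
  also have "\<dots> = (\<integral>\<^sup>+y. indicator (ball x r) y * f y \<partial>lborel) + (\<integral>\<^sup>+y. indicator (- ball x r) y * f y \<partial>lborel)"
    by (rule nn_integral_add) measurable
  finally show ?thesis .
qed

lemma exp_neg_le_inverse:
  assumes "0 < (u::real)"
  shows "exp (- u) \<le> 1 / u"
proof -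
  have "u \<le> exp u" using exp_ge_add_one_self[of u] by linarith
  then show ?thesis using assms by (simp add: exp_minus field_simps)
qed

lemma mult_exp_neg_square_le:
  assumes c: "0 < (c::real)" and \<rho>: "0 \<le> \<rho>"
  shows "\<rho> * exp (- c * \<rho>\<^sup>2) \<le> c powr (-1/2)"
proof -
  define u where "u = sqrt c * \<rho>"
  have "0 \<le> u" unfolding u_def using c \<rho> by simp
  then have "u \<le> 1 + u\<^sup>2" using sum_power2_ge_zero[of "u - 1" 0] by (simp add: power2_diff)
  also have "\<dots> \<le> exp (u\<^sup>2)" by (rule exp_ge_add_one_self)
  finally have "u * exp (- u\<^sup>2) \<le> 1" by (simp add: exp_minus field_simps)
  moreover have "c * \<rho>\<^sup>2 = u\<^sup>2" "\<rho> = u / sqrt c"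
    using c unfolding u_def by (simp_all add: power_mult_distrib)
  ultimately have "\<rho> * exp (- c * \<rho>\<^sup>2) \<le> 1 / sqrt c"
    using c by (simp add: divide_right_mono)
  also have "\<dots> = c powr (-1/2)" using c by (simp add: powr_minus_divide powr_half_sqrt)
  finally show ?thesis .
qed

definition gauss_riesz_const :: "real \<Rightarrow> real" where
  "gauss_riesz_const d = riesz_ball_const (d - 1) d + riesz_outer_const (d + 1) d"

definition gauss_conv_const :: "real \<Rightarrow> real \<Rightarrow> real" where
  "gauss_conv_const a d = 2 powr a * (gauss_riesz_const d + riesz_ball_const a d)"

lemma gauss_riesz_const_pos: "1 \<le> d \<Longrightarrow> 0 < gauss_riesz_const d"
  unfolding gauss_riesz_const_def by (intro add_pos_pos riesz_ball_const_pos riesz_outer_const_pos) auto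

lemma gauss_conv_const_pos: "1 \<le> d \<Longrightarrow> a < d \<Longrightarrow> 0 < gauss_conv_const a d"
  unfolding gauss_conv_const_def by (intro mult_pos_pos add_pos_pos gauss_riesz_const_pos riesz_ball_const_pos) auto

lemma nn_integral_ball_norm_powr_gaussian_le:
  assumes c: "0 \<le> c" and R: "0 < R"
  shows "(\<integral>\<^sup>+\<eta>. indicator (ball 0 R) \<eta> *
            ennreal (norm (\<eta>::'a::euclidean_space) powr (1 - real DIM('a)) * exp (- c * (norm \<eta>)\<^sup>2)) \<partial>lborel)
          \<le> ennreal (riesz_ball_const (real DIM('a) - 1) (real DIM('a)) * R)"
proof -
  have "(\<integral>\<^sup>+\<eta>. indicator (ball 0 R) \<eta> *
            ennreal (norm (\<eta>::'a) powr (1 - real DIM('a)) * exp (- c * (norm \<eta>)\<^sup>2)) \<partial>lborel)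
      \<le> (\<integral>\<^sup>+\<eta>. indicator (ball (0::'a) R) \<eta> * ennreal (norm (\<eta> - 0) powr (- (real DIM('a) - 1))) \<partial>lborel)"
    using c by (intro nn_integral_mono mult_left_mono ennreal_leI) (auto intro!: mult_left_le)
  also have "\<dots> \<le> ennreal (riesz_ball_const (real DIM('a) - 1) (real DIM('a)) * R powr (real DIM('a) - (real DIM('a) - 1)))"
    by (rule nn_integral_ball_norm_powr_le) (use R in auto)
  finally show ?thesis using R by simp
qed

lemma nn_integral_outside_ball_norm_powr_gaussian_le:
  assumes c: "0 < c" and R: "0 < R"
  shows "(\<integral>\<^sup>+\<eta>. indicator (- ball 0 R) \<eta> *
            ennreal (norm (\<eta>::'a::euclidean_space) powr (1 - real DIM('a)) * exp (- c * (norm \<eta>)\<^sup>2)) \<partial>lborel)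
          \<le> ennreal (riesz_outer_const (real DIM('a) + 1) (real DIM('a)) / (c * R))"
proof -
  define d where "d = real DIM('a)"
  have "(\<integral>\<^sup>+\<eta>. indicator (- ball 0 R) \<eta> * ennreal (norm (\<eta>::'a) powr (1 - d) * exp (- c * (norm \<eta>)\<^sup>2)) \<partial>lborel)
      \<le> (\<integral>\<^sup>+\<eta>. ennreal (1 / c) * (indicator (- ball (0::'a) R) \<eta> * ennreal (norm (\<eta> - 0) powr (- (d + 1)))) \<partial>lborel)"
  proof (rule nn_integral_mono)
    fix \<eta> :: 'a
    show "indicator (- ball 0 R) \<eta> * ennreal (norm \<eta> powr (1 - d) * exp (- c * (norm \<eta>)\<^sup>2))
        \<le> ennreal (1 / c) * (indicator (- ball 0 R) \<eta> * ennreal (norm (\<eta> - 0) powr (- (d + 1))))"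
    proof (cases "\<eta> \<in> ball 0 R")
      case False
      then have \<eta>: "0 < norm \<eta>" using R by auto
      have "norm \<eta> powr (1 - d) * exp (- c * (norm \<eta>)\<^sup>2) \<le> norm \<eta> powr (1 - d) * (1 / (c * (norm \<eta>)\<^sup>2))"
        using exp_neg_le_inverse[of "c * (norm \<eta>)\<^sup>2"] c \<eta> by (intro mult_left_mono) auto
      also have "\<dots> = 1 / c * norm \<eta> powr (- (d + 1))"
        using \<eta> c by (simp add: powr_add[symmetric] powr_minus_divide power2_eq_square powr_diff field_simps)
      finally show ?thesis using False c by (simp add: ennreal_mult'[symmetric] ennreal_leI)
    qed simp
  qed
  also have "\<dots> = ennreal (1 / c) * (\<integral>\<^sup>+\<eta>. indicator (- ball (0::'a) R) \<eta> * ennreal (norm (\<eta> - 0) powr (- (d + 1))) \<partial>lborel)"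
    by (rule nn_integral_cmult) measurable
  also have "\<dots> \<le> ennreal (1 / c) * ennreal (riesz_outer_const (d + 1) d * R powr (d - (d + 1)))"
    unfolding d_def by (intro mult_left_mono nn_integral_outside_ball_norm_powr_le) (use R in auto)
  also have "\<dots> = ennreal (riesz_outer_const (d + 1) d / (c * R))"
    using c R by (simp add: ennreal_mult'[symmetric] powr_minus_divide)
  finally show ?thesis unfolding d_def .
qed

text \<open>Split at \<open>|\<eta>| = c^(-1/2)\<close>: inside, drop the Gaussian; outside, use
  \<open>e^(-c |\<eta>|^2) \<le> 1 / (c |\<eta>|^2)\<close>.\<close>

lemma nn_integral_norm_powr_gaussian_le:
  assumes c: "0 < c"
  shows "(\<integral>\<^sup>+\<eta>. ennreal (norm (\<eta>::'a::euclidean_space) powr (1 - real DIM('a)) * exp (- c * (norm \<eta>)\<^sup>2)) \<partial>lborel)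
          \<le> ennreal (gauss_riesz_const (real DIM('a)) * c powr (-1/2))"
proof -
  define R where "R = c powr (-1/2)"
  have R: "0 < R" and cR: "c * R = 1 / R"
    unfolding R_def using c by (simp_all add: powr_minus_divide powr_half_sqrt real_sqrt_mult_self divide_simps)
  have meas: "(\<lambda>\<eta>. ennreal (norm (\<eta>::'a) powr (1 - real DIM('a)) * exp (- c * (norm \<eta>)\<^sup>2)))
      \<in> borel_measurable borel"
    by measurable
  have "(\<integral>\<^sup>+\<eta>. ennreal (norm (\<eta>::'a) powr (1 - real DIM('a)) * exp (- c * (norm \<eta>)\<^sup>2)) \<partial>lborel)
      \<le> ennreal (riesz_ball_const (real DIM('a) - 1) (real DIM('a)) * R)
        + ennreal (riesz_outer_const (real DIM('a) + 1) (real DIM('a)) / (c * R))"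
    unfolding nn_integral_split_ball[OF meas, where x=0 and r=R]
    using c R by (intro add_mono nn_integral_ball_norm_powr_gaussian_le nn_integral_outside_ball_norm_powr_gaussian_le) auto
  also have "\<dots> = ennreal (gauss_riesz_const (real DIM('a)) * R)"
    using riesz_ball_const_pos[of "real DIM('a) - 1" "real DIM('a)"]
      riesz_outer_const_pos[of "real DIM('a)" "real DIM('a) + 1"] R
    by (simp add: cR gauss_riesz_const_def ennreal_plus[symmetric] distrib_right del: ennreal_plus)
  finally show ?thesis unfolding R_def .
qed

lemma nn_integral_near_gaussian_convolution_le:
  fixes \<xi> :: "'a::euclidean_space"
  assumes a: "0 \<le> a" "a < real DIM('a)" and c: "0 < c" and \<xi>: "\<xi> \<noteq> 0"
  defines "\<rho> \<equiv> norm \<xi> / 2"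
  shows "(\<integral>\<^sup>+\<eta>. indicator (ball \<xi> \<rho>) \<eta> *
            ennreal (norm \<eta> powr (1 - real DIM('a)) * norm (\<xi> - \<eta>) powr (-a) * exp (- c * (norm \<eta>)\<^sup>2)) \<partial>lborel)
          \<le> ennreal (riesz_ball_const a (real DIM('a)) * c powr (-1/2) * \<rho> powr (-a))"
proof -
  define d where "d = real DIM('a)"
  have \<rho>: "0 < \<rho>" unfolding \<rho>_def using \<xi> by simp
  have [measurable]: "ball \<xi> \<rho> \<in> sets borel" by simp
  define B where "B = \<rho> powr (1 - d) * exp (- c * \<rho>\<^sup>2)"
  have "(\<integral>\<^sup>+\<eta>. indicator (ball \<xi> \<rho>) \<eta> *
          ennreal (norm \<eta> powr (1 - d) * norm (\<xi> - \<eta>) powr (-a) * exp (- c * (norm \<eta>)\<^sup>2)) \<partial>lborel)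
      \<le> (\<integral>\<^sup>+\<eta>. ennreal B * (indicator (ball \<xi> \<rho>) \<eta> * ennreal (norm (\<eta> - \<xi>) powr (-a))) \<partial>lborel)"
  proof (rule nn_integral_mono)
    fix \<eta> :: 'a
    show "indicator (ball \<xi> \<rho>) \<eta> * ennreal (norm \<eta> powr (1 - d) * norm (\<xi> - \<eta>) powr (-a) * exp (- c * (norm \<eta>)\<^sup>2))
        \<le> ennreal B * (indicator (ball \<xi> \<rho>) \<eta> * ennreal (norm (\<eta> - \<xi>) powr (-a)))"
    proof (cases "\<eta> \<in> ball \<xi> \<rho>")
      case True
      then have "norm (\<xi> - \<eta>) < \<rho>" by (simp add: dist_norm)
      moreover have "norm \<xi> \<le> norm \<eta> + norm (\<xi> - \<eta>)" by (metis norm_triangle_sub add.commute)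
      ultimately have \<eta>: "\<rho> \<le> norm \<eta>" unfolding \<rho>_def by simp
      have "norm \<eta> powr (1 - d) \<le> \<rho> powr (1 - d)"
        using \<eta> \<rho> by (intro powr_mono2') (auto simp: d_def)
      moreover have "exp (- c * (norm \<eta>)\<^sup>2) \<le> exp (- c * \<rho>\<^sup>2)"
        using \<eta> \<rho> c by (simp add: power_mono)
      ultimately have "norm \<eta> powr (1 - d) * exp (- c * (norm \<eta>)\<^sup>2) \<le> B"
        unfolding B_def by (intro mult_mono) auto
      then have "(norm \<eta> powr (1 - d) * exp (- c * (norm \<eta>)\<^sup>2)) * norm (\<eta> - \<xi>) powr (-a) \<le> B * norm (\<eta> - \<xi>) powr (-a)"
        by (rule mult_right_mono) simp
      then show ?thesis
        using True by (simp add: B_def ennreal_mult'[symmetric] ennreal_leI norm_minus_commute mult_ac)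
    qed simp
  qed
  also have "\<dots> = ennreal B * (\<integral>\<^sup>+\<eta>. indicator (ball \<xi> \<rho>) \<eta> * ennreal (norm (\<eta> - \<xi>) powr (-a)) \<partial>lborel)"
    by (rule nn_integral_cmult) measurable
  also have "\<dots> \<le> ennreal B * ennreal (riesz_ball_const a d * \<rho> powr (d - a))"
    unfolding d_def by (intro mult_left_mono nn_integral_ball_norm_powr_le) (use a \<rho> in auto)
  also have "\<dots> = ennreal (riesz_ball_const a d * (\<rho> * exp (- c * \<rho>\<^sup>2)) * \<rho> powr (-a))"
  proof -
    have "\<rho> powr (1 - d) * \<rho> powr (d - a) = \<rho> * \<rho> powr (-a)"
      using \<rho> powr_add[of \<rho> 1 "-a"] by (simp add: powr_add[symmetric])
    then have "B * (riesz_ball_const a d * \<rho> powr (d - a)) = riesz_ball_const a d * (\<rho> * exp (- c * \<rho>\<^sup>2)) * \<rho> powr (-a)"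
      unfolding B_def by (metis (no_types, lifting) mult.commute mult.left_commute)
    moreover have "0 \<le> B" unfolding B_def by simp
    ultimately show ?thesis by (simp only: ennreal_mult'[symmetric])
  qed
  also have "\<dots> \<le> ennreal (riesz_ball_const a d * c powr (-1/2) * \<rho> powr (-a))"
    using mult_exp_neg_square_le[OF c, of \<rho>] \<rho> riesz_ball_const_pos[of a d] a
    by (intro ennreal_leI mult_right_mono mult_left_mono) (auto simp: d_def)
  finally show ?thesis unfolding d_def .
qed

lemma nn_integral_far_gaussian_convolution_le:
  fixes \<xi> :: "'a::euclidean_space"
  assumes a: "0 \<le> a" and c: "0 < c" and \<rho>: "0 < \<rho>"
  shows "(\<integral>\<^sup>+\<eta>. indicator (- ball \<xi> \<rho>) \<eta> *
            ennreal (norm \<eta> powr (1 - real DIM('a)) * norm (\<xi> - \<eta>) powr (-a) * exp (- c * (norm \<eta>)\<^sup>2)) \<partial>lborel)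
          \<le> ennreal (gauss_riesz_const (real DIM('a)) * c powr (-1/2) * \<rho> powr (-a))"
proof -
  define G where "G \<eta> = norm \<eta> powr (1 - real DIM('a)) * exp (- c * (norm \<eta>)\<^sup>2)" for \<eta> :: 'a
  have "(\<integral>\<^sup>+\<eta>. indicator (- ball \<xi> \<rho>) \<eta> *
            ennreal (norm \<eta> powr (1 - real DIM('a)) * norm (\<xi> - \<eta>) powr (-a) * exp (- c * (norm \<eta>)\<^sup>2)) \<partial>lborel)
      \<le> (\<integral>\<^sup>+\<eta>. ennreal (\<rho> powr (-a)) * ennreal (G \<eta>) \<partial>lborel)"
  proof (rule nn_integral_mono)
    fix \<eta> :: 'a
    show "indicator (- ball \<xi> \<rho>) \<eta> * ennreal (norm \<eta> powr (1 - real DIM('a)) * norm (\<xi> - \<eta>) powr (-a) * exp (- c * (norm \<eta>)\<^sup>2))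
        \<le> ennreal (\<rho> powr (-a)) * ennreal (G \<eta>)"
    proof (cases "\<eta> \<in> ball \<xi> \<rho>")
      case False
      then have "norm (\<xi> - \<eta>) powr (-a) \<le> \<rho> powr (-a)"
        using \<rho> a by (intro powr_mono2') (auto simp: dist_norm)
      from mult_right_mono[OF this, of "G \<eta>"] False show ?thesis
        by (simp add: G_def ennreal_mult'[symmetric] ennreal_leI mult_ac)
    qed simp
  qed
  also have "\<dots> = ennreal (\<rho> powr (-a)) * (\<integral>\<^sup>+\<eta>. ennreal (G \<eta>) \<partial>lborel)"
    by (rule nn_integral_cmult) (simp add: G_def)
  also have "\<dots> \<le> ennreal (\<rho> powr (-a)) * ennreal (gauss_riesz_const (real DIM('a)) * c powr (-1/2))"
    unfolding G_def by (intro mult_left_mono nn_integral_norm_powr_gaussian_le c) simp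
  finally show ?thesis by (simp add: ennreal_mult'[symmetric] mult_ac)
qed

text \<open>Split at \<open>|\<eta> - \<xi>| = |\<xi>|/2\<close>: near \<open>\<xi>\<close> the factor \<open>|\<eta>|^(1-d) e^(-c|\<eta>|^2)\<close>
  is bounded by its value at \<open>|\<eta>| = |\<xi>|/2\<close>, away from \<open>\<xi>\<close> the factor \<open>|\<xi> - \<eta>|^(-a)\<close> is.\<close>

lemma nn_integral_gaussian_convolution_le:
  fixes \<xi> :: "'a::euclidean_space"
  assumes a: "0 \<le> a" "a < real DIM('a)" and c: "0 < c" and \<xi>: "\<xi> \<noteq> 0"
  shows "(\<integral>\<^sup>+\<eta>. ennreal (norm \<eta> powr (1 - real DIM('a)) * norm (\<xi> - \<eta>) powr (-a) * exp (- c * (norm \<eta>)\<^sup>2)) \<partial>lborel)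
          \<le> ennreal (gauss_conv_const a (real DIM('a)) * norm \<xi> powr (-a) * c powr (-1/2))"
proof -
  define d where "d = real DIM('a)"
  define \<rho> where "\<rho> = norm \<xi> / 2"
  have \<rho>: "0 < \<rho>" unfolding \<rho>_def using \<xi> by simp
  have meas: "(\<lambda>\<eta>. ennreal (norm \<eta> powr (1 - d) * norm (\<xi> - \<eta>) powr (-a) * exp (- c * (norm \<eta>)\<^sup>2)))
      \<in> borel_measurable borel"
    by measurable
  have "(\<integral>\<^sup>+\<eta>. ennreal (norm \<eta> powr (1 - d) * norm (\<xi> - \<eta>) powr (-a) * exp (- c * (norm \<eta>)\<^sup>2)) \<partial>lborel)
      \<le> ennreal (riesz_ball_const a d * c powr (-1/2) * \<rho> powr (-a))
        + ennreal (gauss_riesz_const d * c powr (-1/2) * \<rho> powr (-a))"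
    unfolding nn_integral_split_ball[OF meas, where x=\<xi> and r=\<rho>]
    using nn_integral_near_gaussian_convolution_le[OF a c \<xi>]
      nn_integral_far_gaussian_convolution_le[OF a(1) c \<rho>, where \<xi>=\<xi>]
    unfolding d_def \<rho>_def by (rule add_mono)
  also have "\<dots> = ennreal (gauss_conv_const a d * norm \<xi> powr (-a) * c powr (-1/2))"
  proof -
    have "\<rho> powr (-a) = 2 powr a * norm \<xi> powr (-a)"
      unfolding \<rho>_def using \<xi> by (simp add: powr_divide powr_minus_divide)
    then show ?thesis
      using riesz_ball_const_pos[of a d] gauss_riesz_const_pos[of d] a c \<rho>
      by (simp add: d_def gauss_conv_const_def ennreal_plus[symmetric] algebra_simps del: ennreal_plus)
  qed
  finally show ?thesis unfolding d_def .
qed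

section \<open>The time integral\<close>

definition heat_time_bound :: "real \<Rightarrow> real \<Rightarrow> real \<Rightarrow> real" where
  "heat_time_bound b t l = exp (- (t/2) * l\<^sup>2) * ((t/2) powr (1 - b) / (1 - b))
     + (t/2) powr (-b) * ((1 - exp (- (t/2) * l\<^sup>2)) / l\<^sup>2)"

lemma heat_time_bound_nonneg: "0 < t \<Longrightarrow> b < 1 \<Longrightarrow> 0 \<le> heat_time_bound b t l"
  unfolding heat_time_bound_def by (intro add_nonneg_nonneg mult_nonneg_nonneg divide_nonneg_nonneg) auto

lemma heat_time_integrand_le:
  fixes t l s :: real
  assumes b: "0 \<le> b" and s: "0 \<le> s" "s \<le> t"
  shows "exp (- (t - s) * l\<^sup>2) * s powr (-b)
    \<le> indicator {0..t/2} s * (exp (- (t/2) * l\<^sup>2) * s powr (-b))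
      + indicator {t/2..t} s * ((t/2) powr (-b) * exp (- (t - s) * l\<^sup>2))"
proof (cases "s \<le> t/2")
  case True
  then have "t/2 * l\<^sup>2 \<le> (t - s) * l\<^sup>2" by (intro mult_right_mono) auto
  then have "exp (- (t - s) * l\<^sup>2) \<le> exp (- (t/2) * l\<^sup>2)" by (simp only: exp_le_cancel_iff)
  then have "exp (- (t - s) * l\<^sup>2) * s powr (-b) \<le> indicator {0..t/2} s * (exp (- (t/2) * l\<^sup>2) * s powr (-b))"
    using True s by (simp add: mult_right_mono)
  then show ?thesis by (rule add_increasing2[rotated]) simp
next
  case False
  then have "s powr (-b) \<le> (t/2) powr (-b)" using b s by (intro powr_mono2') auto
  then have "exp (- (t - s) * l\<^sup>2) * s powr (-b) \<le> indicator {t/2..t} s * ((t/2) powr (-b) * exp (- (t - s) * l\<^sup>2))"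
    using False s by (simp add: mult.commute mult_left_mono)
  then show ?thesis by (rule add_increasing[rotated]) simp
qed

lemma has_integral_exp_heat:
  fixes l :: real
  assumes "a \<le> t" and l: "0 < l"
  shows "((\<lambda>s. exp (- (t - s) * l\<^sup>2)) has_integral ((1 - exp (- (t - a) * l\<^sup>2)) / l\<^sup>2)) {a..t}"
proof -
  have "((\<lambda>s. exp (- (t - s) * l\<^sup>2)) has_integral
      (exp (- (t - t) * l\<^sup>2) / l\<^sup>2 - exp (- (t - a) * l\<^sup>2) / l\<^sup>2)) {a..t}"
  proof (rule fundamental_theorem_of_calculus)
    fix x assume "x \<in> {a..t}"
    show "((\<lambda>s. exp (- (t - s) * l\<^sup>2) / l\<^sup>2) has_vector_derivative exp (- (t - x) * l\<^sup>2)) (at x within {a..t})"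
      unfolding has_real_derivative_iff_has_vector_derivative[symmetric]
      using l by (auto intro!: derivative_eq_intros simp: field_simps)
  qed (fact assms)
  then show ?thesis by (simp add: diff_divide_distrib)
qed

lemma nn_integral_heat_time_le:
  fixes t l :: real
  assumes t: "0 < t" and l: "0 < l" and b: "0 \<le> b" "b < 1"
  shows "(\<integral>\<^sup>+s. indicator {0..t} s * ennreal (exp (- (t - s) * l\<^sup>2) * s powr (-b)) \<partial>lborel)
     \<le> ennreal (heat_time_bound b t l)"
proof -
  have "((\<lambda>s. s powr (-b)) has_integral ((t/2) powr (1 - b) / (1 - b))) {0..t/2}"
    using has_integral_powr_from_0[of "-b" "t/2"] t b by simp
  then have "((\<lambda>s. exp (- (t/2) * l\<^sup>2) * s powr (-b)) has_integral
      (exp (- (t/2) * l\<^sup>2) * ((t/2) powr (1 - b) / (1 - b)))) {0..t/2}"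
    by (rule has_integral_mult_right)
  from nn_integral_has_integral_lebesgue[OF _ this] have I1: "(\<integral>\<^sup>+s. indicator {0..t/2} s * ennreal (exp (- (t/2) * l\<^sup>2) * s powr (-b)) \<partial>lborel)
      = ennreal (exp (- (t/2) * l\<^sup>2) * ((t/2) powr (1 - b) / (1 - b)))"
    by (simp add: indicator_mult_ennreal mult.commute)
  have "((\<lambda>s. exp (- (t - s) * l\<^sup>2)) has_integral ((1 - exp (- (t/2) * l\<^sup>2)) / l\<^sup>2)) {t/2..t}"
    using has_integral_exp_heat[OF _ l, of "t/2" t] t by simp
  then have "((\<lambda>s. (t/2) powr (-b) * exp (- (t - s) * l\<^sup>2)) has_integral
      ((t/2) powr (-b) * ((1 - exp (- (t/2) * l\<^sup>2)) / l\<^sup>2))) {t/2..t}"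
    by (rule has_integral_mult_right)
  from nn_integral_has_integral_lebesgue[OF _ this] have I2: "(\<integral>\<^sup>+s. indicator {t/2..t} s * ennreal ((t/2) powr (-b) * exp (- (t - s) * l\<^sup>2)) \<partial>lborel)
      = ennreal ((t/2) powr (-b) * ((1 - exp (- (t/2) * l\<^sup>2)) / l\<^sup>2))"
    by (simp add: indicator_mult_ennreal mult.commute)
  have "(\<integral>\<^sup>+s. indicator {0..t} s * ennreal (exp (- (t - s) * l\<^sup>2) * s powr (-b)) \<partial>lborel)
      \<le> (\<integral>\<^sup>+s. indicator {0..t/2} s * ennreal (exp (- (t/2) * l\<^sup>2) * s powr (-b))
          + indicator {t/2..t} s * ennreal ((t/2) powr (-b) * exp (- (t - s) * l\<^sup>2)) \<partial>lborel)"
  proof (rule nn_integral_mono)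
    fix s :: real
    show "indicator {0..t} s * ennreal (exp (- (t - s) * l\<^sup>2) * s powr (-b))
      \<le> indicator {0..t/2} s * ennreal (exp (- (t/2) * l\<^sup>2) * s powr (-b))
          + indicator {t/2..t} s * ennreal ((t/2) powr (-b) * exp (- (t - s) * l\<^sup>2))"
    proof (cases "s \<in> {0..t}")
      case True
      then have "s \<in> {0..t/2} \<or> s \<in> {t/2..t}" by auto
      with heat_time_integrand_le[OF b(1), of s t l] True show ?thesis
        by (auto simp: indicator_def ennreal_plus[symmetric] ennreal_leI simp del: ennreal_plus)
    qed simp
  qed
  also have "\<dots> = (\<integral>\<^sup>+s. indicator {0..t/2} s * ennreal (exp (- (t/2) * l\<^sup>2) * s powr (-b)) \<partial>lborel)
      + (\<integral>\<^sup>+s. indicator {t/2..t} s * ennreal ((t/2) powr (-b) * exp (- (t - s) * l\<^sup>2)) \<partial>lborel)"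
    by (rule nn_integral_add) measurable
  also have "\<dots> = ennreal (heat_time_bound b t l)"
    unfolding I1 I2 heat_time_bound_def using t l b
    by (intro ennreal_plus[symmetric] mult_nonneg_nonneg divide_nonneg_nonneg) auto
  finally show ?thesis .
qed

lemma one_minus_exp_neg_le_powr:
  assumes "0 \<le> \<theta>" "\<theta> \<le> 1" "0 \<le> (x::real)"
  shows "1 - exp (- x) \<le> x powr \<theta>"
proof (cases "x \<le> 1")
  case True
  have "1 - exp (- x) \<le> x" using exp_ge_add_one_self[of "-x"] by linarith
  also have "x \<le> x powr \<theta>"
    using assms True powr_mono'[of \<theta> 1 x] by (cases "x = 0") auto
  finally show ?thesis .
next
  case False
  then have "1 \<le> x powr \<theta>" using assms by (intro ge_one_powr_ge_zero) auto
  then show ?thesis by (smt (verit) exp_gt_zero)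
qed

lemma powr_mult_exp_neg_le_one:
  assumes "0 \<le> \<theta>" "\<theta> \<le> 1" "0 \<le> (x::real)"
  shows "x powr \<theta> * exp (- x) \<le> 1"
proof (cases "x \<le> 1")
  case True
  then have "x powr \<theta> \<le> 1" using assms by (intro powr_le1) auto
  moreover have "exp (- x) \<le> 1" using assms by simp
  ultimately show ?thesis by (metis mult_le_one exp_ge_zero powr_ge_zero)
next
  case False
  then have "x powr \<theta> \<le> x powr 1" using assms by (intro powr_mono) auto
  also have "\<dots> = x" using False by simp
  also have "\<dots> \<le> exp x" using exp_ge_add_one_self[of x] by linarith
  finally show ?thesis by (simp add: exp_minus divide_simps)
qed

lemma heat_time_bound_X_weight:
  assumes t: "0 < t" and l: "0 < l"
  shows "l powr (1/3) * heat_time_bound (5/6) t l \<le> 7"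
proof -
  define h where "h = t/2"
  define x where "x = h * l\<^sup>2"
  have h: "0 < h" and x: "0 \<le> x" unfolding h_def x_def using t by simp_all
  have x_powr: "x powr \<theta> = h powr \<theta> * l powr (2 * \<theta>)" for \<theta>
  proof -
    have "(l\<^sup>2) powr \<theta> = l powr (2 * \<theta>)"
      using l powr_powr[of l 2 \<theta>] by (simp add: powr_realpow)
    then show ?thesis unfolding x_def using h by (simp add: powr_mult)
  qed
  have "l powr (1/3) * (exp (- h * l\<^sup>2) * (h powr (1/6) / (1/6))) = 6 * (x powr (1/6) * exp (- x))"
    unfolding x_powr by (simp add: x_def mult_ac)
  also have "\<dots> \<le> 6" using powr_mult_exp_neg_le_one[of "1/6" x] x by simp
  finally have first: "l powr (1/3) * (exp (- h * l\<^sup>2) * (h powr (1 - 5/6) / (1 - 5/6))) \<le> 6" by simp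
  have "l powr (1/3) * (h powr (-5/6) * ((1 - exp (- h * l\<^sup>2)) / l\<^sup>2))
      = l powr (1/3) * h powr (-5/6) * (1 - exp (- x)) / l\<^sup>2"
    unfolding x_def by simp
  also have "\<dots> \<le> l powr (1/3) * h powr (-5/6) * (h powr (5/6) * l powr (5/3)) / l\<^sup>2"
    using one_minus_exp_neg_le_powr[of "5/6" x] x_powr[of "5/6"] x l
    by (intro divide_right_mono mult_left_mono) auto
  also have "\<dots> = (h powr (-5/6) * h powr (5/6)) * (l powr (1/3) * l powr (5/3)) / l\<^sup>2"
    by (simp only: mult_ac)
  also have "\<dots> = 1"
    using h l by (simp add: powr_add[symmetric] powr_realpow)
  finally have second: "l powr (1/3) * (h powr (-5/6) * ((1 - exp (- h * l\<^sup>2)) / l\<^sup>2)) \<le> 1" .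
  show ?thesis
    using first second unfolding heat_time_bound_def h_def by (simp add: distrib_left)
qed

lemma heat_time_bound_Y_weight:
  assumes t: "0 < t" and l: "0 < l"
  shows "t powr (1/3) * (l * heat_time_bound (5/6) t l) \<le> 7 * 2 powr (1/3)"
proof -
  define h where "h = t/2"
  define x where "x = h * l\<^sup>2"
  have h: "0 < h" and x: "0 \<le> x" unfolding h_def x_def using t by simp_all
  have "l * (exp (- h * l\<^sup>2) * (h powr (1 - 5/6) / (1 - 5/6))) = 6 * h powr (1/6) * (l * exp (- h * l\<^sup>2))"
    by (simp add: mult_ac)
  also have "\<dots> \<le> 6 * h powr (1/6) * h powr (-1/2)"
    using mult_exp_neg_square_le[OF h, of l] l by (intro mult_left_mono) auto
  also have "\<dots> = 6 * h powr (-1/3)" using h by (simp add: mult.assoc powr_add[symmetric])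
  finally have first: "l * (exp (- h * l\<^sup>2) * (h powr (1 - 5/6) / (1 - 5/6))) \<le> 6 * h powr (-1/3)" .
  have "1 - exp (- x) \<le> h powr (1/2) * l"
    using one_minus_exp_neg_le_powr[of "1/2" x] x h l
    by (simp add: x_def powr_mult powr_half_sqrt)
  have "l * (h powr (-5/6) * ((1 - exp (- h * l\<^sup>2)) / l\<^sup>2)) = h powr (-5/6) * (1 - exp (- x)) / l"
    unfolding x_def using l by (simp add: power2_eq_square field_simps)
  also have "\<dots> \<le> h powr (-5/6) * (h powr (1/2) * l) / l"
    using \<open>1 - exp (- x) \<le> h powr (1/2) * l\<close> l by (intro divide_right_mono mult_left_mono) auto
  also have "\<dots> = h powr (-1/3)" using l h by (simp add: powr_add[symmetric])
  finally have second: "l * (h powr (-5/6) * ((1 - exp (- h * l\<^sup>2)) / l\<^sup>2)) \<le> h powr (-1/3)" .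
  have "l * heat_time_bound (5/6) t l \<le> 7 * h powr (-1/3)"
    using first second unfolding heat_time_bound_def h_def by (simp add: distrib_left)
  then have "t powr (1/3) * (l * heat_time_bound (5/6) t l) \<le> t powr (1/3) * (7 * h powr (-1/3))"
    using t by (intro mult_left_mono) auto
  also have "\<dots> = 7 * 2 powr (1/3)"
    using t by (simp add: h_def powr_divide powr_minus_divide)
  finally show ?thesis .
qed

section \<open>Measurability and norms\<close>

lemma norm_integral_le_nn_integral:
  fixes f :: "'a \<Rightarrow> 'b::{banach, second_countable_topology}"
  shows "ennreal (norm (integral\<^sup>L M f)) \<le> (\<integral>\<^sup>+x. ennreal (norm (f x)) \<partial>M)"
  by (cases "integrable M f") (simp_all add: integral_norm_bound_ennreal not_integrable_integral_eq)

text \<open>\<open>P\<close> need not be measurable, so a null set is transported instead of using \<open>AE_distr_iff\<close>.\<close>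

lemma AE_lborel_reflect:
  fixes \<xi> :: "'a::euclidean_space"
  assumes "AE x in lborel. P x"
  shows "AE \<eta> in lborel. P (\<xi> - \<eta>)"
proof -
  from assms obtain N where N: "{x \<in> space lborel. \<not> P x} \<subseteq> N" "emeasure lborel N = 0" "N \<in> sets lborel"
    by (auto elim: AE_E)
  define h where "h x = \<xi> + (-1) *\<^sub>R x" for x :: 'a
  have h_meas: "h \<in> borel_measurable borel" unfolding h_def by simp
  have "lborel = density (distr lborel borel h) (\<lambda>_. \<bar>-1::real\<bar>^DIM('a))"
    unfolding h_def by (rule lborel_affine) simp
  then have "lborel = distr lborel borel h" by (simp add: density_1)
  then have "emeasure lborel N = emeasure (distr lborel borel h) N" by simp
  also have "\<dots> = emeasure lborel (h -` N \<inter> space lborel)"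
    using N(3) h_meas by (intro emeasure_distr) (auto simp: measurable_lborel1)
  finally have "emeasure lborel (h -` N) = 0" using N(2) by simp
  moreover have "h -` N \<in> sets lborel"
    using N(3) h_meas by (auto simp: measurable_lborel1 measurable_sets_borel)
  moreover have "{x \<in> space lborel. \<not> P (\<xi> - x)} \<subseteq> h -` N"
    using N(1) unfolding h_def by auto
  ultimately show ?thesis by (intro AE_I)
qed

lemma esssup_finite_nonnegE:
  fixes f :: "'a \<Rightarrow> ereal"
  assumes finite: "esssup M f < \<infinity>" and nonneg: "\<And>x. 0 \<le> f x" and M: "emeasure M (space M) \<noteq> 0"
  obtains Y where "0 \<le> Y" "esssup M f = ereal Y" "AE x in M. f x \<le> ereal Y"
proof -
  have "f \<in> borel_measurable M"
    using esssup_non_measurable[of f M] finite by (auto simp: top_ereal_def)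
  then have "esssup M (\<lambda>x. 0::ereal) \<le> esssup M f"
    by (intro esssup_mono) (auto intro: nonneg)
  moreover have "esssup M (\<lambda>x. 0::ereal) = 0" by (rule esssup_const[OF M])
  ultimately have "0 \<le> esssup M f" by simp
  with finite obtain Y where "esssup M f = ereal Y" "0 \<le> Y" by (cases "esssup M f") auto
  with esssup_AE[of f M] show ?thesis by (intro that) auto
qed

lemma measurable_Lop:
  fixes V :: "real \<Rightarrow> real^'n::finite \<Rightarrow> complex"
  assumes V[measurable]: "(\<lambda>p. V (fst p) (snd p)) \<in> borel_measurable (borel \<Otimes>\<^sub>M borel)"
    and g[measurable]: "g \<in> borel_measurable borel"
  shows "(\<lambda>p. Lop \<tau> g V (fst p) (snd p)) \<in> borel_measurable (borel \<Otimes>\<^sub>M borel)"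
proof -
  define F where "F ps \<eta> = complex_of_real (exp (- (fst (fst ps) - snd ps) * (norm (snd (fst ps)))\<^sup>2)
      * (snd (fst ps) \<bullet> \<eta>) * exp (- snd ps * (norm \<eta>)\<^sup>2 / \<tau>)) * V (snd ps) (snd (fst ps) - \<eta>) * g \<eta>"
    for ps :: "(real \<times> (real^'n)) \<times> real" and \<eta> :: "real^'n"
  have [measurable]: "(\<lambda>x::((real \<times> (real^'n)) \<times> real) \<times> (real^'n). g (snd x))
      \<in> borel_measurable (((borel \<Otimes>\<^sub>M borel) \<Otimes>\<^sub>M borel) \<Otimes>\<^sub>M borel)"
    by (rule measurable_compose[OF measurable_snd g])
  have "(\<lambda>x::((real \<times> (real^'n)) \<times> real) \<times> (real^'n). (snd (fst x), snd (fst (fst x)) - snd x))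
      \<in> (((borel \<Otimes>\<^sub>M borel) \<Otimes>\<^sub>M borel) \<Otimes>\<^sub>M borel) \<rightarrow>\<^sub>M (borel \<Otimes>\<^sub>M borel)"
    by measurable
  from measurable_compose[OF this V]
  have [measurable]: "(\<lambda>x::((real \<times> (real^'n)) \<times> real) \<times> (real^'n). V (snd (fst x)) (snd (fst (fst x)) - snd x))
      \<in> borel_measurable (((borel \<Otimes>\<^sub>M borel) \<Otimes>\<^sub>M borel) \<Otimes>\<^sub>M borel)"
    by simp
  have "(\<lambda>x. F (fst x) (snd x)) \<in> borel_measurable (((borel \<Otimes>\<^sub>M borel) \<Otimes>\<^sub>M borel) \<Otimes>\<^sub>M borel)"
    unfolding F_def by measurable
  then have "case_prod F \<in> borel_measurable (((borel \<Otimes>\<^sub>M borel) \<Otimes>\<^sub>M borel) \<Otimes>\<^sub>M lborel)"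
    by (simp add: split_beta' cong: measurable_cong_sets)
  then have [measurable]: "(\<lambda>ps. integral\<^sup>L lborel (F ps)) \<in> borel_measurable ((borel \<Otimes>\<^sub>M borel) \<Otimes>\<^sub>M borel)"
    by (rule lborel.borel_measurable_lebesgue_integral)
  define G where "G p s = indicator {0..fst p} s *\<^sub>R integral\<^sup>L lborel (F (p, s))"
    for p :: "real \<times> (real^'n)" and s :: real
  have "(\<lambda>x. G (fst x) (snd x)) \<in> borel_measurable ((borel \<Otimes>\<^sub>M borel) \<Otimes>\<^sub>M borel)"
    unfolding G_def by (simp only: prod.collapse indicator_def atLeastAtMost_iff case_prod_beta) measurable
  then have "case_prod G \<in> borel_measurable ((borel \<Otimes>\<^sub>M borel) \<Otimes>\<^sub>M lborel)"
    by (simp add: split_beta' cong: measurable_cong_sets)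
  then have "(\<lambda>p. integral\<^sup>L lborel (G p)) \<in> borel_measurable (borel \<Otimes>\<^sub>M borel)"
    by (rule lborel.borel_measurable_lebesgue_integral)
  moreover have "Lop \<tau> g V (fst p) (snd p)
      = complex_of_real ((2 * pi) powr (- real CARD('n))) * integral\<^sup>L lborel (G p)" for p
    unfolding Lop_def set_lebesgue_integral_def G_def F_def by simp
  ultimately show ?thesis by simp
qed

text \<open>\<open>Lop\<close> only sees \<open>U s\<close> for \<open>s > 0\<close>, as \<open>s = 0\<close> is a null set of the time integral.\<close>

lemma Lop_cong_pos:
  assumes "\<And>s. 0 < s \<Longrightarrow> V s = U s"
  shows "Lop \<tau> g U t \<xi> = Lop \<tau> g V t \<xi>"
proof -
  define F where "F W s = indicator {0..t} s *\<^sub>R (CLBINT \<eta>. complex_of_real (exp (- (t - s) * (norm \<xi>)\<^sup>2)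
      * (\<xi> \<bullet> \<eta>) * exp (- s * (norm \<eta>)\<^sup>2 / \<tau>)) * W s (\<xi> - \<eta>) * g \<eta>)" for W s
  have "F U s = F V s" if "s \<notin> {0}" for s
    using assms[of s] that by (cases "s \<in> {0..t}") (auto simp: F_def)
  then have "integral\<^sup>L lborel (F U) = integral\<^sup>L lborel (F V)"
    by (intro integral_discrete_difference[of "{0}"]) auto
  then show ?thesis unfolding Lop_def set_lebesgue_integral_def F_def by simp
qed

lemma meas_td_Lop:
  fixes U :: "real \<Rightarrow> real^'n::finite \<Rightarrow> complex"
  assumes U: "meas_td U" and g[measurable]: "g \<in> borel_measurable borel"
  shows "meas_td (Lop \<tau> g U)"
proof -
  define V where "V s \<zeta> = (if 0 < s then U s \<zeta> else 0)" for s \<zeta>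
  have "(\<lambda>p. V (fst p) (snd p)) \<in> borel_measurable (borel \<Otimes>\<^sub>M borel)"
    using U unfolding meas_td_def V_def by (simp add: measurable_lborel1 borel_prod)
  from measurable_Lop[OF this g]
  have [measurable]: "(\<lambda>p. Lop \<tau> g V (fst p) (snd p)) \<in> borel_measurable (borel \<Otimes>\<^sub>M borel)" .
  have eq: "Lop \<tau> g U t \<xi> = Lop \<tau> g V t \<xi>" for t \<xi>
    by (rule Lop_cong_pos) (simp add: V_def fun_eq_iff)
  have "(\<lambda>p::real \<times> (real^'n). if 0 < fst p then Lop \<tau> g V (fst p) (snd p) else 0)
      \<in> borel_measurable (borel \<Otimes>\<^sub>M borel)"
    by measurable
  then show ?thesis unfolding meas_td_def eq by (simp add: measurable_lborel1 borel_prod)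
qed

lemma wnorm_le_ereal:
  fixes V :: "real \<Rightarrow> real^'n::finite \<Rightarrow> complex"
  assumes V: "meas_td V" and K: "0 \<le> K"
    and bound: "\<And>t \<xi>. 0 < t \<Longrightarrow> t powr b * norm \<xi> powr a * cmod (V t \<xi>) \<le> K"
  shows "wnorm b a V \<le> ereal K"
  unfolding wnorm_def
proof (rule esssup_I)
  define W where "W p = (if 0 < fst p then V (fst p) (snd p) else 0)" for p :: "real \<times> (real^'n)"
  have [measurable]: "W \<in> borel_measurable (borel \<Otimes>\<^sub>M borel)"
    using V unfolding meas_td_def W_def by (simp add: measurable_lborel1 borel_prod)
  have "(\<lambda>p. if 0 < fst p then ereal (fst p powr b * norm (snd p) powr a * cmod (W p)) else 0)
      \<in> borel_measurable (borel \<Otimes>\<^sub>M borel)"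
    by measurable
  then show "(\<lambda>p::real \<times> (real^'n). if 0 < fst p then ereal (fst p powr b * norm (snd p) powr a * cmod (V (fst p) (snd p))) else 0)
      \<in> borel_measurable lborel"
    by (simp add: W_def borel_prod measurable_lborel1 cong: if_cong)
  show "AE p in lborel. (if 0 < fst p then ereal (fst p powr b * norm (snd p) powr a * cmod (V (fst p) (snd p))) else 0) \<le> ereal K"
    using bound K by (intro AE_I2) auto
qed

lemma PMgrad_finiteE:
  fixes g :: "real^'n::finite \<Rightarrow> complex"
  assumes "PMgrad g < \<infinity>"
  obtains P where "0 \<le> P" "PMgrad g = ereal P"
    "AE \<eta> in lborel. norm \<eta> powr real CARD('n) * cmod (g \<eta>) \<le> P"
proof -
  obtain P where "0 \<le> P" "PMgrad g = ereal P"
      "AE \<eta> in lborel. ereal (norm \<eta> powr real CARD('n) * cmod (g \<eta>)) \<le> ereal P"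
    using assms unfolding PMgrad_def by (rule esssup_finite_nonnegE) simp_all
  then show ?thesis by (intro that) (auto elim: eventually_mono)
qed

lemma Ynorm_finiteE:
  fixes U :: "real \<Rightarrow> real^'n::finite \<Rightarrow> complex"
  assumes "Ynorm a U < \<infinity>"
  obtains Y where "0 \<le> Y" "Ynorm a U = ereal Y"
    "AE s in lborel. AE \<zeta> in lborel.
       0 < s \<longrightarrow> s powr (1 + (a - real CARD('n)) / 2) * norm \<zeta> powr a * cmod (U s \<zeta>) \<le> Y"
proof -
  define f where "f p = (if 0 < fst p
      then ereal (fst p powr (1 + (a - real CARD('n)) / 2) * norm (snd p) powr a * cmod (U (fst p) (snd p)))
      else 0)" for p :: "real \<times> (real^'n)"
  have Ynorm_eq: "Ynorm a U = esssup lborel f" unfolding Ynorm_def wnorm_def f_def ..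
  have "esssup lborel f < \<infinity>" using assms unfolding Ynorm_eq .
  moreover have "0 \<le> f p" for p by (simp add: f_def)
  ultimately obtain Y where Y: "0 \<le> Y" "Ynorm a U = ereal Y" "AE p in lborel. f p \<le> ereal Y"
    unfolding Ynorm_eq by (rule esssup_finite_nonnegE) simp
  from Y(3) have "AE p in lborel \<Otimes>\<^sub>M lborel. f p \<le> ereal Y" by (subst lborel_prod)
  then have "AE s in lborel. AE \<zeta> in lborel. f (s, \<zeta>) \<le> ereal Y" by (rule lborel_pair.AE_pair)
  then show ?thesis
    using Y(1,2) by (intro that) (auto elim!: eventually_mono simp: f_def)
qed

section \<open>Estimates for the operator\<close>

lemma norm_Lop_integrand_le:
  fixes \<xi> \<eta> :: "real^'n::finite" and U :: "real \<Rightarrow> real^'n \<Rightarrow> complex"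
  assumes s: "0 < s" and \<eta>: "\<eta> \<noteq> 0" "\<xi> - \<eta> \<noteq> 0"
    and U_le: "s powr (1/3) * norm (\<xi> - \<eta>) powr a * cmod (U s (\<xi> - \<eta>)) \<le> Y"
    and g_le: "norm \<eta> powr real CARD('n) * cmod (g \<eta>) \<le> P" and Y: "0 \<le> Y" and P: "0 \<le> P"
  shows "norm (complex_of_real (exp (- (t - s) * (norm \<xi>)\<^sup>2) * (\<xi> \<bullet> \<eta>) * exp (- s * (norm \<eta>)\<^sup>2 / \<tau>))
              * U s (\<xi> - \<eta>) * g \<eta>)
    \<le> (exp (- (t - s) * (norm \<xi>)\<^sup>2) * norm \<xi> * Y * P * s powr (-1/3)) *
       (norm \<eta> powr (1 - real CARD('n)) * norm (\<xi> - \<eta>) powr (-a) * exp (- (s/\<tau>) * (norm \<eta>)\<^sup>2))"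
proof -
  define d where "d = real CARD('n)"
  define e1 where "e1 = exp (- (t - s) * (norm \<xi>)\<^sup>2)"
  define e2 where "e2 = exp (- (s/\<tau>) * (norm \<eta>)\<^sup>2)"
  have pos: "0 < norm \<eta>" "0 < norm (\<xi> - \<eta>)" using \<eta> by auto
  have U_le': "cmod (U s (\<xi> - \<eta>)) \<le> Y * s powr (-1/3) * norm (\<xi> - \<eta>) powr (-a)"
    using U_le s pos by (simp add: powr_minus_divide field_simps)
  have g_le': "cmod (g \<eta>) \<le> P * norm \<eta> powr (- d)"
    using g_le pos unfolding d_def by (simp add: powr_minus_divide field_simps)
  have "norm (complex_of_real (e1 * (\<xi> \<bullet> \<eta>) * e2) * U s (\<xi> - \<eta>) * g \<eta>)
      = e1 * \<bar>\<xi> \<bullet> \<eta>\<bar> * e2 * cmod (U s (\<xi> - \<eta>)) * cmod (g \<eta>)"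
    unfolding e1_def e2_def by (simp add: norm_mult abs_mult)
  also have "\<dots> \<le> e1 * (norm \<xi> * norm \<eta>) * e2 * (Y * s powr (-1/3) * norm (\<xi> - \<eta>) powr (-a)) * (P * norm \<eta> powr (- d))"
    by (intro mult_mono mult_left_mono mult_right_mono Cauchy_Schwarz_ineq2 U_le' g_le')
      (auto simp: e1_def e2_def intro!: mult_nonneg_nonneg Y P)
  also have "\<dots> = (e1 * norm \<xi> * Y * P * s powr (-1/3)) * ((norm \<eta> * norm \<eta> powr (- d)) * norm (\<xi> - \<eta>) powr (-a) * e2)"
    by (simp only: mult_ac)
  also have "norm \<eta> * norm \<eta> powr (- d) = norm \<eta> powr (1 - d)"
    using pos powr_add[of "norm \<eta>" 1 "-d"] by simp
  finally show ?thesis unfolding e1_def e2_def d_def by (simp add: mult_ac)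
qed

lemma norm_Lop_space_integral_le:
  fixes \<xi> :: "real^'n::finite" and U :: "real \<Rightarrow> real^'n \<Rightarrow> complex"
  assumes \<tau>: "0 < \<tau>" and a: "0 \<le> a" "a < real CARD('n)" and s: "0 < s" and \<xi>: "\<xi> \<noteq> 0"
    and U_le: "AE \<zeta> in lborel. s powr (1/3) * norm \<zeta> powr a * cmod (U s \<zeta>) \<le> Y"
    and g_le: "AE \<eta> in lborel. norm \<eta> powr real CARD('n) * cmod (g \<eta>) \<le> P"
    and Y: "0 \<le> Y" and P: "0 \<le> P"
  shows "ennreal (norm (LINT \<eta>|lborel. complex_of_real (exp (- (t - s) * (norm \<xi>)\<^sup>2) * (\<xi> \<bullet> \<eta>)
              * exp (- s * (norm \<eta>)\<^sup>2 / \<tau>)) * U s (\<xi> - \<eta>) * g \<eta>))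
    \<le> ennreal (gauss_conv_const a (real CARD('n)) * sqrt \<tau> * Y * P * norm \<xi> powr (1 - a)
        * (exp (- (t - s) * (norm \<xi>)\<^sup>2) * s powr (-5/6)))"
    (is "ennreal (norm (LINT \<eta>|lborel. ?F \<eta>)) \<le> _")
proof -
  define l where "l = norm \<xi>"
  define M where "M = exp (- (t - s) * l\<^sup>2) * l * Y * P * s powr (-1/3)"
  define J where "J \<eta> = norm \<eta> powr (1 - real CARD('n)) * norm (\<xi> - \<eta>) powr (-a) * exp (- (s/\<tau>) * (norm \<eta>)\<^sup>2)"
    for \<eta> :: "real^'n"
  have l: "0 < l" and M: "0 \<le> M" unfolding l_def M_def using \<xi> Y P by simp_all
  have "AE \<eta> in lborel. norm (?F \<eta>) \<le> M * J \<eta>"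
    using AE_lborel_reflect[OF U_le, of \<xi>] g_le AE_lborel_singleton[of 0] AE_lborel_singleton[of \<xi>]
  proof eventually_elim
    case (elim \<eta>)
    then show ?case
      using norm_Lop_integrand_le[OF s, of \<eta> \<xi> a U Y g P t \<tau>] Y P unfolding M_def J_def l_def by simp
  qed
  then have "ennreal (norm (LINT \<eta>|lborel. ?F \<eta>)) \<le> (\<integral>\<^sup>+\<eta>. ennreal M * ennreal (J \<eta>) \<partial>lborel)"
    using M by (intro order.trans[OF norm_integral_le_nn_integral] nn_integral_mono_AE)
      (auto simp: ennreal_mult'[symmetric] intro: ennreal_leI elim: eventually_mono)
  also have "\<dots> = ennreal M * (\<integral>\<^sup>+\<eta>. ennreal (J \<eta>) \<partial>lborel)"
    by (rule nn_integral_cmult) (simp add: J_def)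
  also have "\<dots> \<le> ennreal M * ennreal (gauss_conv_const a (real CARD('n)) * l powr (-a) * (s/\<tau>) powr (-1/2))"
    using nn_integral_gaussian_convolution_le[of a "s/\<tau>" \<xi>] a s \<tau> \<xi>
    unfolding J_def l_def by (intro mult_left_mono) auto
  also have "\<dots> = ennreal (gauss_conv_const a (real CARD('n)) * sqrt \<tau> * Y * P * l powr (1 - a)
        * (exp (- (t - s) * l\<^sup>2) * s powr (-5/6)))"
  proof -
    have s_powr: "(s/\<tau>) powr (-1/2) = s powr (-1/2) * sqrt \<tau>"
      using s \<tau> by (simp add: powr_divide powr_minus_divide powr_half_sqrt)
    have powr_eqs: "s powr (-1/3) * s powr (-1/2) = s powr (-5/6)" "l * l powr (-a) = l powr (1 - a)"
      using s l powr_add[of l 1 "-a"] by (simp_all add: powr_add[symmetric])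
    have "M * (gauss_conv_const a (real CARD('n)) * l powr (-a) * (s/\<tau>) powr (-1/2))
        = gauss_conv_const a (real CARD('n)) * sqrt \<tau> * Y * P * (l * l powr (-a))
          * (exp (- (t - s) * l\<^sup>2) * (s powr (-1/3) * s powr (-1/2)))"
      unfolding M_def s_powr by (simp only: mult_ac)
    note this[unfolded powr_eqs]
    then show ?thesis by (simp only: ennreal_mult'[OF M, symmetric])
  qed
  finally show ?thesis unfolding l_def .
qed

lemma norm_Lop_le:
  fixes U :: "real \<Rightarrow> real^'n::finite \<Rightarrow> complex" and \<xi> :: "real^'n"
  assumes \<tau>: "0 < \<tau>" and a: "0 \<le> a" "a < real CARD('n)" and t: "0 < t" and \<xi>: "\<xi> \<noteq> 0"
    and U_le: "AE s in lborel. AE \<zeta> in lborel. 0 < s \<longrightarrow> s powr (1/3) * norm \<zeta> powr a * cmod (U s \<zeta>) \<le> Y"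
    and g_le: "AE \<eta> in lborel. norm \<eta> powr real CARD('n) * cmod (g \<eta>) \<le> P"
    and Y: "0 \<le> Y" and P: "0 \<le> P"
  shows "cmod (Lop \<tau> g U t \<xi>) \<le> (2*pi) powr (- real CARD('n)) * gauss_conv_const a (real CARD('n))
           * sqrt \<tau> * Y * P * norm \<xi> powr (1 - a) * heat_time_bound (5/6) t (norm \<xi>)"
proof -
  define K where "K = gauss_conv_const a (real CARD('n)) * sqrt \<tau> * Y * P * norm \<xi> powr (1 - a)"
  define l where "l = norm \<xi>"
  define F where "F s \<eta> = complex_of_real (exp (- (t - s) * (norm \<xi>)\<^sup>2) * (\<xi> \<bullet> \<eta>) * exp (- s * (norm \<eta>)\<^sup>2 / \<tau>))
      * U s (\<xi> - \<eta>) * g \<eta>" for s \<eta>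
  have l: "0 < l" unfolding l_def using \<xi> by simp
  have K: "0 \<le> K"
    unfolding K_def using Y P \<tau> gauss_conv_const_pos[of "real CARD('n)" a] a by simp
  have "AE s in lborel. indicator {0..t} s * ennreal (norm (LINT \<eta>|lborel. F s \<eta>))
      \<le> ennreal K * (indicator {0..t} s * ennreal (exp (- (t - s) * l\<^sup>2) * s powr (-5/6)))"
    using U_le AE_lborel_singleton[of 0]
  proof eventually_elim
    case (elim s)
    show ?case
    proof (cases "s \<in> {0..t}")
      case True
      with elim have "0 < s" by auto
      from norm_Lop_space_integral_le[OF \<tau> a this \<xi> _ g_le Y P] elim(1) \<open>0 < s\<close>
      show ?thesis
        using True K unfolding F_def K_def l_def by (simp add: ennreal_mult'[symmetric] del: ennreal_mult')
    qed simp
  qed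
  then have "ennreal (norm (LINT s|lborel. indicator {0..t} s *\<^sub>R (LINT \<eta>|lborel. F s \<eta>)))
      \<le> (\<integral>\<^sup>+s. ennreal K * (indicator {0..t} s * ennreal (exp (- (t - s) * l\<^sup>2) * s powr (-5/6))) \<partial>lborel)"
    by (intro order.trans[OF norm_integral_le_nn_integral] nn_integral_mono_AE)
      (auto simp: indicator_def elim: eventually_mono)
  also have "\<dots> = ennreal K * (\<integral>\<^sup>+s. indicator {0..t} s * ennreal (exp (- (t - s) * l\<^sup>2) * s powr (-5/6)) \<partial>lborel)"
    by (rule nn_integral_cmult) measurable
  also have "\<dots> \<le> ennreal K * ennreal (heat_time_bound (5/6) t l)"
    using nn_integral_heat_time_le[OF t l, of "5/6"] by (intro mult_left_mono) auto
  finally have "norm (LINT s|lborel. indicator {0..t} s *\<^sub>R (LINT \<eta>|lborel. F s \<eta>)) \<le> K * heat_time_bound (5/6) t l"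
    using K heat_time_bound_nonneg[OF t, of "5/6" l]
    by (simp add: ennreal_mult'[symmetric] del: ennreal_mult')
  then show ?thesis
    unfolding Lop_def set_lebesgue_integral_def F_def K_def l_def
    by (simp add: norm_mult mult_left_mono mult_ac)
qed

definition Lop_const :: "real \<Rightarrow> real" where
  "Lop_const d = 7 * 2 powr (1/3) * (2*pi) powr (- d) * gauss_conv_const (d - 4/3) d"

lemma Lop_const_pos: "2 \<le> d \<Longrightarrow> 0 < Lop_const d"
  unfolding Lop_const_def by (intro mult_pos_pos gauss_conv_const_pos) auto

text \<open>With \<open>a = d - 4/3\<close> the pointwise bound carries \<open>|\<xi>|^(1-a)\<close>, which the \<open>Y\<close>-weight
  turns into \<open>t^(1/3) |\<xi>|\<close> and the \<open>X\<close>-weight into \<open>|\<xi>|^(1/3)\<close>.\<close>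

lemma heat_time_bound_weights:
  fixes d :: real
  assumes t: "0 < t" and l: "0 < l" and Q: "0 \<le> Q"
    and z: "z \<le> Q * l powr (1 - (d - 4/3)) * heat_time_bound (5/6) t l"
  shows "t powr (1/3) * l powr (d - 4/3) * z \<le> 7 * 2 powr (1/3) * Q"
    and "l powr (d - 2) * z \<le> 7 * 2 powr (1/3) * Q"
proof -
  have "t powr (1/3) * l powr (d - 4/3) * z
      \<le> Q * (t powr (1/3) * (l powr (d - 4/3) * l powr (1 - (d - 4/3)) * heat_time_bound (5/6) t l))"
    using mult_left_mono[OF z, of "t powr (1/3) * l powr (d - 4/3)"] by (simp add: mult_ac)
  also have "l powr (d - 4/3) * l powr (1 - (d - 4/3)) = l" using l by (simp add: powr_add[symmetric])
  also have "Q * (t powr (1/3) * (l * heat_time_bound (5/6) t l)) \<le> Q * (7 * 2 powr (1/3))"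
    using heat_time_bound_Y_weight[OF t l] Q by (rule mult_left_mono)
  finally show "t powr (1/3) * l powr (d - 4/3) * z \<le> 7 * 2 powr (1/3) * Q"
    by (simp add: mult_ac)
  have "l powr (d - 2) * z \<le> Q * (l powr (d - 2) * l powr (1 - (d - 4/3)) * heat_time_bound (5/6) t l)"
    using mult_left_mono[OF z, of "l powr (d - 2)"] by (simp add: mult_ac)
  also have "l powr (d - 2) * l powr (1 - (d - 4/3)) = l powr (1/3)"
    using l by (simp add: powr_add[symmetric])
  also have "Q * (l powr (1/3) * heat_time_bound (5/6) t l) \<le> Q * 7"
    using heat_time_bound_X_weight[OF t l] Q by (rule mult_left_mono)
  also have "\<dots> \<le> 7 * 2 powr (1/3) * Q"
    using mult_left_mono[OF ge_one_powr_ge_zero[of 2 "1/3"] Q] by simp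
  finally show "l powr (d - 2) * z \<le> 7 * 2 powr (1/3) * Q" .
qed

lemma Lop_weighted_le:
  fixes U :: "real \<Rightarrow> real^'n::finite \<Rightarrow> complex"
  assumes d: "CARD('n) \<ge> 2" and \<tau>: "0 < \<tau>" and t: "0 < t"
    and U_le: "AE s in lborel. AE \<zeta> in lborel. 0 < s \<longrightarrow>
      s powr (1/3) * norm \<zeta> powr (real CARD('n) - 4/3) * cmod (U s \<zeta>) \<le> Y"
    and g_le: "AE \<eta> in lborel. norm \<eta> powr real CARD('n) * cmod (g \<eta>) \<le> P"
    and Y: "0 \<le> Y" and P: "0 \<le> P"
  shows "t powr (1/3) * norm \<xi> powr (real CARD('n) - 4/3) * cmod (Lop \<tau> g U t \<xi>)
           \<le> Lop_const (real CARD('n)) * sqrt \<tau> * Y * P"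
    and "norm \<xi> powr (real CARD('n) - 2) * cmod (Lop \<tau> g U t \<xi>)
           \<le> Lop_const (real CARD('n)) * sqrt \<tau> * Y * P"
proof -
  define d where "d = real CARD('n)"
  define Q where "Q = (2*pi) powr (- d) * gauss_conv_const (d - 4/3) d * sqrt \<tau> * Y * P"
  have Q: "0 \<le> Q" and K: "Lop_const d * sqrt \<tau> * Y * P = 7 * 2 powr (1/3) * Q"
    unfolding Q_def Lop_const_def
    using gauss_conv_const_pos[of d "d - 4/3"] d \<tau> Y P by (simp_all add: d_def mult_ac)
  have "t powr (1/3) * norm \<xi> powr (d - 4/3) * cmod (Lop \<tau> g U t \<xi>) \<le> 7 * 2 powr (1/3) * Q
      \<and> norm \<xi> powr (d - 2) * cmod (Lop \<tau> g U t \<xi>) \<le> 7 * 2 powr (1/3) * Q"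
  proof (cases "\<xi> = 0")
    case False
    have "cmod (Lop \<tau> g U t \<xi>) \<le> Q * norm \<xi> powr (1 - (d - 4/3)) * heat_time_bound (5/6) t (norm \<xi>)"
      using norm_Lop_le[OF \<tau> _ _ t False U_le g_le Y P] d unfolding Q_def d_def by (simp add: mult_ac)
    from heat_time_bound_weights[OF t _ Q this] False show ?thesis by simp
  qed (use Q in simp)
  then show "t powr (1/3) * norm \<xi> powr (real CARD('n) - 4/3) * cmod (Lop \<tau> g U t \<xi>)
           \<le> Lop_const (real CARD('n)) * sqrt \<tau> * Y * P"
    and "norm \<xi> powr (real CARD('n) - 2) * cmod (Lop \<tau> g U t \<xi>)
           \<le> Lop_const (real CARD('n)) * sqrt \<tau> * Y * P"
    unfolding K[unfolded d_def] d_def by simp_all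
qed

lemma abs_ln_div_exp_ge_one:
  assumes "0 < (\<tau>::real)" "\<tau> \<le> 1"
  shows "1 \<le> \<bar>ln (\<tau> / exp 1)\<bar>"
proof -
  have "ln \<tau> \<le> 0" using assms by simp
  moreover have "ln (\<tau> / exp 1) = ln \<tau> - 1" using assms ln_divide_pos[of \<tau> "exp 1"] by simp
  ultimately show ?thesis by arith
qed

theorem mainTheorem9:
  assumes "CARD('n::finite) \<ge> 2"
  shows "\<exists>C>0. \<forall>(\<tau>::real) (g::real^'n \<Rightarrow> complex).
     0 < \<tau> \<and> \<tau> \<le> 1 \<and> g \<in> borel_measurable lborel \<and> PMgrad g < \<infinity> \<longrightarrow>
     (\<forall>U::real \<Rightarrow> real^'n \<Rightarrow> complex.
        inY (real CARD('n) - 4/3) U \<longrightarrow>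
          inY (real CARD('n) - 4/3) (Lop \<tau> g U) \<and>
          Ynorm (real CARD('n) - 4/3) (Lop \<tau> g U)
            \<le> ereal (C * sqrt \<tau> * \<bar>ln (\<tau> / exp 1)\<bar>) * PMgrad g * Ynorm (real CARD('n) - 4/3) U \<and>
          inX (Lop \<tau> g U) \<and>
          Xnorm (Lop \<tau> g U)
            \<le> ereal (C * sqrt \<tau> * \<bar>ln (\<tau> / exp 1)\<bar>) * PMgrad g * Ynorm (real CARD('n) - 4/3) U)"
proof (intro exI[of _ "Lop_const (real CARD('n))"] conjI allI impI)
  let ?C = "Lop_const (real CARD('n))" and ?a = "real CARD('n) - 4/3"
  show C: "0 < ?C" using assms by (intro Lop_const_pos) simp
  fix \<tau> :: real and g :: "real^'n \<Rightarrow> complex" and U :: "real \<Rightarrow> real^'n \<Rightarrow> complex"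
  assume "0 < \<tau> \<and> \<tau> \<le> 1 \<and> g \<in> borel_measurable lborel \<and> PMgrad g < \<infinity>" and U: "inY ?a U"
  then have \<tau>: "0 < \<tau>" "\<tau> \<le> 1" and g: "g \<in> borel_measurable borel" "PMgrad g < \<infinity>"
    by (auto simp: measurable_lborel1)
  obtain P where P: "0 \<le> P" "PMgrad g = ereal P"
    and g_le: "AE \<eta> in lborel. norm \<eta> powr real CARD('n) * cmod (g \<eta>) \<le> P"
    using PMgrad_finiteE[OF g(2)] by blast
  obtain Y where Y: "0 \<le> Y" "Ynorm ?a U = ereal Y"
    and U_le: "AE s in lborel. AE \<zeta> in lborel. 0 < s \<longrightarrow> s powr (1/3) * norm \<zeta> powr ?a * cmod (U s \<zeta>) \<le> Y"
    using Ynorm_finiteE[of ?a U] U by (auto simp: inY_def)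
  note weighted = Lop_weighted_le[OF assms \<tau>(1) _ U_le g_le Y(1) P(1)]
  have meas: "meas_td (Lop \<tau> g U)" using U g(1) by (auto simp: inY_def intro: meas_td_Lop)
  have K: "0 \<le> ?C * sqrt \<tau> * Y * P" using C \<tau> Y P by simp
  have Y_le: "Ynorm ?a (Lop \<tau> g U) \<le> ereal (?C * sqrt \<tau> * Y * P)"
    unfolding Ynorm_def using wnorm_le_ereal[OF meas K weighted(1)] by simp
  have X_le: "Xnorm (Lop \<tau> g U) \<le> ereal (?C * sqrt \<tau> * Y * P)"
    unfolding Xnorm_def by (rule wnorm_le_ereal[OF meas K]) (use weighted(2) in simp)
  have "?C * sqrt \<tau> * Y * P \<le> ?C * sqrt \<tau> * \<bar>ln (\<tau> / exp 1)\<bar> * P * Y"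
    using mult_left_mono[OF abs_ln_div_exp_ge_one[OF \<tau>] K] by (simp add: mult_ac)
  then have bound: "ereal (?C * sqrt \<tau> * Y * P) \<le> ereal (?C * sqrt \<tau> * \<bar>ln (\<tau> / exp 1)\<bar>) * PMgrad g * Ynorm ?a U"
    unfolding P(2) Y(2) by simp
  show "inY ?a (Lop \<tau> g U)" "inX (Lop \<tau> g U)"
    using meas Y_le X_le by (auto simp: inY_def inX_def le_less_trans)
  show "Ynorm ?a (Lop \<tau> g U) \<le> ereal (?C * sqrt \<tau> * \<bar>ln (\<tau> / exp 1)\<bar>) * PMgrad g * Ynorm ?a U"
    "Xnorm (Lop \<tau> g U) \<le> ereal (?C * sqrt \<tau> * \<bar>ln (\<tau> / exp 1)\<bar>) * PMgrad g * Ynorm ?a U"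
    using Y_le X_le bound by (auto intro: order_trans)
qed

end
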